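(* Let $P : E \to B$ be a functor between finite categories which is both fibered in groupoids and cofibered in groupoids. Let $B = \coprod_i B_i$ be the decomposition of $B$ into connected components, and let $F_i$ be the fiber category $P^{-1}(b)$ over an object $b$ of $B_i$. If $E$ and each $B_i$ have Euler characteristics, then \[ \chi(E) = \sum_i \chi(B_i)\,\chi(F_i). \]
   Context: Matrices and Euler characteristic: for finite sets $I,J$ and $\zeta : I\times J \to \mathbb{Q}$, a weighting is $k^{\bullet} : J \to \mathbb{Q}$ with $\sum_j \zeta(i,j)k^j = 1$ for all $i$; a coweighting is $k_{\bullet} : I\to\mathbb{Q}$ with $\sum_i k_i\zeta(i,j)=1$ for all $j$. $\zeta$ has Euler characteristic if it has both, and then $|\zeta| = \sum_j k^j = \sum_i k_i$. A finite category $A$ has similarity matrix $\zeta_A(x,y) = \#A(x,y)$; $A$ has Euler characteristic if $\zeta_A$ does, and $\chi(A) = |\zeta_A|$. A morphism $f : e \to e'$ in $E$ is cartesian if for every $g : e'' \to e'$ and every $h : P(e'') \to P(e)$ with $P(f)\circ h = P(g)$ there is a unique $\tilde h : e'' \to e$ with $P(\tilde h) = h$ and $f\circ\tilde h = g$. $P$ is fibered in groupoids if every morphism of $E$ is cartesian and every morphism $f : b \to P(e)$ in $B$ has a lift $\tilde f : e' \to e$ with $P(\tilde f)=f$; cofibered in groupoids is the dual notion. The fiber category $P^{-1}(b)$ has objects $e$ with $P(e)=b$ and morphisms $f$ with $P(f)=\mathrm{id}_b$; over a connected component all fibers are equivalent. *)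

theory Defs
  imports Main "HOL.Rat"
begin

definition weighting :: "'i set \<Rightarrow> 'j set \<Rightarrow> ('i \<Rightarrow> 'j \<Rightarrow> rat) \<Rightarrow> ('j \<Rightarrow> rat) \<Rightarrow> bool" where
  "weighting I J \<zeta> k \<longleftrightarrow> (\<forall>i\<in>I. (\<Sum>j\<in>J. \<zeta> i j * k j) = 1)"

definition coweighting :: "'i set \<Rightarrow> 'j set \<Rightarrow> ('i \<Rightarrow> 'j \<Rightarrow> rat) \<Rightarrow> ('i \<Rightarrow> rat) \<Rightarrow> bool" where
  "coweighting I J \<zeta> k \<longleftrightarrow> (\<forall>j\<in>J. (\<Sum>i\<in>I. k i * \<zeta> i j) = 1)"

definition has_euler_mat :: "'i set \<Rightarrow> 'j set \<Rightarrow> ('i \<Rightarrow> 'j \<Rightarrow> rat) \<Rightarrow> bool" where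
  "has_euler_mat I J \<zeta> \<longleftrightarrow> (\<exists>k. weighting I J \<zeta> k) \<and> (\<exists>k. coweighting I J \<zeta> k)"

text \<open>Magnitude: sum of a weighting (independent of the choice when both a weighting
  and a coweighting exist).\<close>
definition euler_mat :: "'i set \<Rightarrow> 'j set \<Rightarrow> ('i \<Rightarrow> 'j \<Rightarrow> rat) \<Rightarrow> rat" where
  "euler_mat I J \<zeta> = (\<Sum>j\<in>J. (SOME k. weighting I J \<zeta> k) j)"

record ('o, 'a) cat =
  Ob :: "'o set"
  Ar :: "'a set"
  Dom :: "'a \<Rightarrow> 'o"
  Cod :: "'a \<Rightarrow> 'o"
  Id :: "'o \<Rightarrow> 'a"
  Comp :: "'a \<Rightarrow> 'a \<Rightarrow> 'a"  (* Comp C g f = g \<circ> f *)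

definition category :: "('o, 'a, 'x) cat_scheme \<Rightarrow> bool" where
  "category C \<longleftrightarrow>
     (\<forall>f\<in>Ar C. Dom C f \<in> Ob C \<and> Cod C f \<in> Ob C) \<and>
     (\<forall>x\<in>Ob C. Id C x \<in> Ar C \<and> Dom C (Id C x) = x \<and> Cod C (Id C x) = x) \<and>
     (\<forall>f\<in>Ar C. \<forall>g\<in>Ar C. Cod C f = Dom C g \<longrightarrow>
        Comp C g f \<in> Ar C \<and> Dom C (Comp C g f) = Dom C f \<and> Cod C (Comp C g f) = Cod C g) \<and>
     (\<forall>f\<in>Ar C. Comp C (Id C (Cod C f)) f = f \<and> Comp C f (Id C (Dom C f)) = f) \<and>
     (\<forall>f\<in>Ar C. \<forall>g\<in>Ar C. \<forall>h\<in>Ar C. Cod C f = Dom C g \<longrightarrow> Cod C g = Dom C h \<longrightarrow>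
        Comp C h (Comp C g f) = Comp C (Comp C h g) f)"

definition finite_category :: "('o, 'a, 'x) cat_scheme \<Rightarrow> bool" where
  "finite_category C \<longleftrightarrow> category C \<and> finite (Ob C) \<and> finite (Ar C)"

definition hom :: "('o, 'a, 'x) cat_scheme \<Rightarrow> 'o \<Rightarrow> 'o \<Rightarrow> 'a set" where
  "hom C x y = {f \<in> Ar C. Dom C f = x \<and> Cod C f = y}"

definition zeta :: "('o, 'a, 'x) cat_scheme \<Rightarrow> 'o \<Rightarrow> 'o \<Rightarrow> rat" where
  "zeta C x y = of_nat (card (hom C x y))"

definition has_euler_cat :: "('o, 'a, 'x) cat_scheme \<Rightarrow> bool" where
  "has_euler_cat C \<longleftrightarrow> has_euler_mat (Ob C) (Ob C) (zeta C)"

definition chi :: "('o, 'a, 'x) cat_scheme \<Rightarrow> rat" where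
  "chi C = euler_mat (Ob C) (Ob C) (zeta C)"

definition is_functor :: "('o, 'a, 'x) cat_scheme \<Rightarrow> ('p, 'b, 'y) cat_scheme \<Rightarrow>
    ('o \<Rightarrow> 'p) \<Rightarrow> ('a \<Rightarrow> 'b) \<Rightarrow> bool" where
  "is_functor C D Fo Fa \<longleftrightarrow>
     (\<forall>x\<in>Ob C. Fo x \<in> Ob D) \<and>
     (\<forall>f\<in>Ar C. Fa f \<in> Ar D \<and> Dom D (Fa f) = Fo (Dom C f) \<and> Cod D (Fa f) = Fo (Cod C f)) \<and>
     (\<forall>x\<in>Ob C. Fa (Id C x) = Id D (Fo x)) \<and>
     (\<forall>f\<in>Ar C. \<forall>g\<in>Ar C. Cod C f = Dom C g \<longrightarrow> Fa (Comp C g f) = Comp D (Fa g) (Fa f))"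

definition cartesian :: "('o, 'a, 'x) cat_scheme \<Rightarrow> ('p, 'b, 'y) cat_scheme \<Rightarrow>
    ('o \<Rightarrow> 'p) \<Rightarrow> ('a \<Rightarrow> 'b) \<Rightarrow> 'a \<Rightarrow> bool" where
  "cartesian E B Fo Fa f \<longleftrightarrow> f \<in> Ar E \<and>
     (\<forall>g\<in>Ar E. \<forall>h\<in>Ar B. Cod E g = Cod E f \<longrightarrow>
        Dom B h = Fo (Dom E g) \<longrightarrow> Cod B h = Fo (Dom E f) \<longrightarrow> Comp B (Fa f) h = Fa g \<longrightarrow>
        (\<exists>!h'. h' \<in> Ar E \<and> Dom E h' = Dom E g \<and> Cod E h' = Dom E f \<and>
               Fa h' = h \<and> Comp E f h' = g))"

definition cocartesian :: "('o, 'a, 'x) cat_scheme \<Rightarrow> ('p, 'b, 'y) cat_scheme \<Rightarrow>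
    ('o \<Rightarrow> 'p) \<Rightarrow> ('a \<Rightarrow> 'b) \<Rightarrow> 'a \<Rightarrow> bool" where
  "cocartesian E B Fo Fa f \<longleftrightarrow> f \<in> Ar E \<and>
     (\<forall>g\<in>Ar E. \<forall>h\<in>Ar B. Dom E g = Dom E f \<longrightarrow>
        Dom B h = Fo (Cod E f) \<longrightarrow> Cod B h = Fo (Cod E g) \<longrightarrow> Comp B h (Fa f) = Fa g \<longrightarrow>
        (\<exists>!h'. h' \<in> Ar E \<and> Dom E h' = Cod E f \<and> Cod E h' = Cod E g \<and>
               Fa h' = h \<and> Comp E h' f = g))"

definition fibered_in_groupoids :: "('o, 'a, 'x) cat_scheme \<Rightarrow> ('p, 'b, 'y) cat_scheme \<Rightarrow>
    ('o \<Rightarrow> 'p) \<Rightarrow> ('a \<Rightarrow> 'b) \<Rightarrow> bool" where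
  "fibered_in_groupoids E B Fo Fa \<longleftrightarrow>
     (\<forall>f\<in>Ar E. cartesian E B Fo Fa f) \<and>
     (\<forall>e\<in>Ob E. \<forall>f\<in>Ar B. Cod B f = Fo e \<longrightarrow>
        (\<exists>f'\<in>Ar E. Cod E f' = e \<and> Fa f' = f))"

definition cofibered_in_groupoids :: "('o, 'a, 'x) cat_scheme \<Rightarrow> ('p, 'b, 'y) cat_scheme \<Rightarrow>
    ('o \<Rightarrow> 'p) \<Rightarrow> ('a \<Rightarrow> 'b) \<Rightarrow> bool" where
  "cofibered_in_groupoids E B Fo Fa \<longleftrightarrow>
     (\<forall>f\<in>Ar E. cocartesian E B Fo Fa f) \<and>
     (\<forall>e\<in>Ob E. \<forall>f\<in>Ar B. Dom B f = Fo e \<longrightarrow>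
        (\<exists>f'\<in>Ar E. Dom E f' = e \<and> Fa f' = f))"

definition fiber :: "('o, 'a, 'x) cat_scheme \<Rightarrow> ('p, 'b, 'y) cat_scheme \<Rightarrow>
    ('o \<Rightarrow> 'p) \<Rightarrow> ('a \<Rightarrow> 'b) \<Rightarrow> 'p \<Rightarrow> ('o, 'a, 'x) cat_scheme" where
  "fiber E B Fo Fa b = E\<lparr>Ob := {e \<in> Ob E. Fo e = b}, Ar := {f \<in> Ar E. Fa f = Id B b}\<rparr>"

definition full_sub :: "('o, 'a, 'x) cat_scheme \<Rightarrow> 'o set \<Rightarrow> ('o, 'a, 'x) cat_scheme" where
  "full_sub C S = C\<lparr>Ob := S, Ar := {f \<in> Ar C. Dom C f \<in> S \<and> Cod C f \<in> S}\<rparr>"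

definition conn_rel :: "('o, 'a, 'x) cat_scheme \<Rightarrow> ('o \<times> 'o) set" where
  "conn_rel C = {(x, y). x \<in> Ob C \<and> y \<in> Ob C \<and>
      (\<exists>f\<in>Ar C. (Dom C f = x \<and> Cod C f = y) \<or> (Dom C f = y \<and> Cod C f = x))}"

definition components :: "('o, 'a, 'x) cat_scheme \<Rightarrow> 'o set set" where
  "components C = Ob C // ((conn_rel C)\<^sup>*)"

end

theory Submission
  imports Defs
begin

(* Write deg_out e (deg_in e) for the number of vertical arrows (arrows over an identity)
   leaving (entering) e.  (Co)cartesianness makes the lifts of an arrow u out of P e a torsor
   over the vertical arrows out of their common target, so they number deg_out of that target;
   hence the reciprocals 1/deg_out of the targets of these lifts sum to 1.  This single counting
   fact shows:
     - e |-> 1/deg_out e is a weighting and e |-> 1/deg_in e a coweighting of every fiber, so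
       chi(P^-1 b) = fib_mass b := sum of 1/deg_out over the fiber;
     - fib_mass is invariant along arrows of B, hence constant on connected components;
     - if K is a weighting of B then e |-> K (P e) / deg_out e is a weighting of E, so
       chi E = sum_b K b * fib_mass b.
   Gluing weightings of the components B_i into a weighting of B and regrouping the last sum
   by components gives chi E = sum_i chi(B_i) * chi(F_i). *)

section \<open>Magnitude of a matrix\<close>

lemma weighting_coweighting_sum:
  assumes "finite I" "finite J" "weighting I J z k" "coweighting I J z c"
  shows "(\<Sum>j\<in>J. k j) = (\<Sum>i\<in>I. c i)"
proof -
  have "(\<Sum>j\<in>J. k j) = (\<Sum>j\<in>J. (\<Sum>i\<in>I. c i * z i j) * k j)"
    using assms(4) by (simp add: coweighting_def)
  also have "\<dots> = (\<Sum>i\<in>I. c i * (\<Sum>j\<in>J. z i j * k j))"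
    by (simp add: sum_distrib_left sum_distrib_right mult.assoc sum.swap[of _ J])
  also have "\<dots> = (\<Sum>i\<in>I. c i)"
    using assms(3) by (simp add: weighting_def)
  finally show ?thesis .
qed

lemma euler_mat_eq:
  assumes "finite I" "finite J" "has_euler_mat I J z" "weighting I J z k"
  shows "euler_mat I J z = (\<Sum>j\<in>J. k j)"
proof -
  from assms(3) obtain c where c: "coweighting I J z c" and ex: "\<exists>k. weighting I J z k"
    unfolding has_euler_mat_def by blast
  have "weighting I J z (SOME k. weighting I J z k)" using ex by (rule someI_ex)
  then show ?thesis unfolding euler_mat_def
    using weighting_coweighting_sum[OF assms(1,2) _ c] assms(4) by metis
qed

lemma sum_card_fibers:
  assumes "finite S" "finite X" "f ` S \<subseteq> X"
  shows "(\<Sum>x\<in>X. of_nat (card {s \<in> S. f s = x}) * h x) = (\<Sum>s\<in>S. h (f s) :: 'c :: comm_semiring_1)"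
proof -
  have "(\<Sum>s\<in>S. h (f s)) = (\<Sum>x\<in>X. \<Sum>s\<in>{s \<in> S. f s = x}. h (f s))"
    by (rule sum.group[symmetric]) (use assms in auto)
  also have "\<dots> = (\<Sum>x\<in>X. of_nat (card {s \<in> S. f s = x}) * h x)"
    by (intro sum.cong refl) simp
  finally show ?thesis by simp
qed

lemma zeta_as_card:
  "zeta C x y = of_nat (card {f \<in> {f \<in> Ar C. Dom C f = x}. Cod C f = y})"
  unfolding zeta_def hom_def by (simp add: conj_assoc)

lemma card_eq_unique_preimages:
  assumes "\<phi> ` V \<subseteq> L" "\<forall>y\<in>L. \<exists>!x. x \<in> V \<and> \<phi> x = y"
  shows "card V = card L"
proof (rule bij_betw_same_card)
  have "inj_on \<phi> V"
  proof (rule inj_onI)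
    fix x x' assume "x \<in> V" "x' \<in> V" "\<phi> x = \<phi> x'"
    moreover have "\<phi> x \<in> L" using assms(1) \<open>x \<in> V\<close> by blast
    ultimately show "x = x'" using assms(2) by metis
  qed
  moreover have "L \<subseteq> \<phi> ` V" using assms(2) by blast
  ultimately show "bij_betw \<phi> V L" using assms(1) by (auto simp: bij_betw_def)
qed

section \<open>Connected components\<close>

definition component_of :: "('o, 'a, 'x) cat_scheme \<Rightarrow> 'o \<Rightarrow> 'o set" where
  "component_of C x = (conn_rel C)\<^sup>* `` {x}"

lemma components_eq: "components C = component_of C ` Ob C"
  unfolding components_def quotient_def component_of_def by blast

lemma component_of_self: "x \<in> component_of C x"
  unfolding component_of_def by blast

lemma component_of_eq:
  assumes "y \<in> component_of C x"
  shows "component_of C y = component_of C x"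
proof -
  let ?R = "(conn_rel C)\<^sup>*"
  have "sym ?R" by (rule sym_rtrancl) (auto simp: sym_def conn_rel_def)
  have xy: "(x, y) \<in> ?R" using assms by (simp add: component_of_def)
  have yx: "(y, x) \<in> ?R" using \<open>sym ?R\<close> xy by (rule symD)
  have "(y, z) \<in> ?R \<longleftrightarrow> (x, z) \<in> ?R" for z
    using rtrancl_trans[OF xy, of z] rtrancl_trans[OF yx, of z] by blast
  then show ?thesis by (auto simp: component_of_def)
qed

lemma component_of_subset: "x \<in> Ob C \<Longrightarrow> component_of C x \<subseteq> Ob C"
proof
  fix y assume "x \<in> Ob C" "y \<in> component_of C x"
  then have "(x, y) \<in> (conn_rel C)\<^sup>*" "x \<in> Ob C" by (auto simp: component_of_def)
  then show "y \<in> Ob C"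
    by (induct rule: rtrancl_induct) (auto simp: conn_rel_def)
qed

lemma component_eq_member:
  assumes "Bi \<in> components C" "x \<in> Bi"
  shows "Bi = component_of C x"
proof -
  obtain y where "Bi = component_of C y" using assms(1) unfolding components_eq by blast
  with assms(2) show ?thesis using component_of_eq by metis
qed

lemma arrow_in_component:
  assumes "category C" "f \<in> Ar C"
  shows "Cod C f \<in> component_of C (Dom C f)"
proof -
  have "Dom C f \<in> Ob C" "Cod C f \<in> Ob C"
    using assms by (auto simp: category_def)
  with assms(2) have "(Dom C f, Cod C f) \<in> conn_rel C"
    unfolding conn_rel_def by blast
  then show ?thesis unfolding component_of_def by blast
qed

lemma zeta_outside_component:
  assumes "category C" "y \<notin> component_of C x"
  shows "zeta C x y = 0"
proof -
  have "hom C x y = {}"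
    using arrow_in_component[OF assms(1)] assms(2) by (auto simp: hom_def)
  then show ?thesis by (simp add: zeta_def)
qed

lemma zeta_full_sub: "x \<in> S \<Longrightarrow> y \<in> S \<Longrightarrow> zeta (full_sub C S) x y = zeta C x y"
  unfolding zeta_def hom_def full_sub_def by (auto intro!: arg_cong[where f = card])

lemma arrow_invariant_component_const:
  assumes "category C" "\<forall>f\<in>Ar C. \<phi> (Dom C f) = \<phi> (Cod C f)" "y \<in> component_of C x"
  shows "\<phi> y = \<phi> x"
proof -
  have "(x, y) \<in> (conn_rel C)\<^sup>*" using assms(3) by (simp add: component_of_def)
  then show ?thesis
  proof (induct rule: rtrancl_induct)
    case (step y z)
    then obtain f where "f \<in> Ar C" "(Dom C f = y \<and> Cod C f = z) \<or> (Dom C f = z \<and> Cod C f = y)"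
      unfolding conn_rel_def by auto
    then show ?case using step(3) assms(2) by auto
  qed simp
qed

lemma sum_by_components:
  assumes "finite (Ob C)"
  shows "(\<Sum>b\<in>Ob C. g b) = (\<Sum>Bi\<in>components C. \<Sum>b\<in>Bi. g b)"
proof -
  have "(\<Sum>b\<in>Ob C. g b) = (\<Sum>Bi\<in>components C. \<Sum>b\<in>{b \<in> Ob C. component_of C b = Bi}. g b)"
    unfolding components_eq by (rule sum.group[symmetric]) (simp_all add: assms)
  also have "\<dots> = (\<Sum>Bi\<in>components C. \<Sum>b\<in>Bi. g b)"
  proof (rule sum.cong[OF refl])
    fix Bi assume Bi: "Bi \<in> components C"
    have "b \<in> Bi" if "b \<in> Ob C" "component_of C b = Bi" for b
      using that component_of_self[of b C] by simp
    moreover have "b \<in> Ob C \<and> component_of C b = Bi" if "b \<in> Bi" for b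
    proof -
      obtain x where x: "x \<in> Ob C" "Bi = component_of C x" using Bi unfolding components_eq by blast
      show ?thesis using that x component_of_subset[OF x(1)] component_of_eq[of b C x] by auto
    qed
    ultimately have "{b \<in> Ob C. component_of C b = Bi} = Bi" by blast
    then show "(\<Sum>b\<in>{b \<in> Ob C. component_of C b = Bi}. g b) = (\<Sum>b\<in>Bi. g b)" by simp
  qed
  finally show ?thesis .
qed

lemma weighting_from_components:
  assumes "finite_category C" "\<forall>Bi\<in>components C. has_euler_cat (full_sub C Bi)"
  obtains K where "weighting (Ob C) (Ob C) (zeta C) K"
    and "\<forall>Bi\<in>components C. chi (full_sub C Bi) = (\<Sum>b\<in>Bi. K b)"
proof -
  define w where "w Bi = (SOME k. weighting Bi Bi (zeta (full_sub C Bi)) k)" for Bi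
  define K where "K b = w (component_of C b) b" for b
  have cat: "category C" and fin: "finite (Ob C)"
    using assms(1) by (auto simp: finite_category_def)
  have w: "weighting Bi Bi (zeta (full_sub C Bi)) (w Bi)" if "Bi \<in> components C" for Bi
  proof -
    have "\<exists>k. weighting Bi Bi (zeta (full_sub C Bi)) k"
      using assms(2) that by (simp add: has_euler_cat_def has_euler_mat_def full_sub_def)
    then show ?thesis unfolding w_def by (rule someI_ex)
  qed
  have K_on: "K b = w Bi b" if "Bi \<in> components C" "b \<in> Bi" for Bi b
    using component_eq_member[OF that] by (simp add: K_def)
  have chi_comp: "chi (full_sub C Bi) = (\<Sum>b\<in>Bi. K b)" if Bi: "Bi \<in> components C" for Bi
    using K_on[OF Bi] by (simp add: chi_def euler_mat_def full_sub_def w_def)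
  have "weighting (Ob C) (Ob C) (zeta C) K"
    unfolding weighting_def
  proof
    fix b assume b: "b \<in> Ob C"
    define Bi where "Bi = component_of C b"
    have Bi: "Bi \<in> components C" "b \<in> Bi"
      using b component_of_self by (auto simp: components_eq Bi_def)
    have "(\<Sum>b'\<in>Ob C. zeta C b b' * K b') = (\<Sum>b'\<in>Bi. zeta C b b' * K b')"
    proof (rule sum.mono_neutral_right)
      show "\<forall>b'\<in>Ob C - Bi. zeta C b b' * K b' = 0"
        using zeta_outside_component[OF cat] by (simp add: Bi_def)
    qed (use fin component_of_subset[OF b] in \<open>simp_all add: Bi_def\<close>)
    also have "\<dots> = (\<Sum>b'\<in>Bi. zeta (full_sub C Bi) b b' * w Bi b')"
      using K_on[OF Bi(1)] Bi(2) by (simp add: zeta_full_sub)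
    also have "\<dots> = 1" using w[OF Bi(1)] Bi(2) by (simp add: weighting_def)
    finally show "(\<Sum>b'\<in>Ob C. zeta C b b' * K b') = 1" .
  qed
  with chi_comp that show ?thesis by blast
qed

section \<open>Functors fibred and cofibred in groupoids\<close>

locale fibred_cofibred =
  fixes E :: "('o, 'a) cat" and B :: "('p, 'b) cat"
    and Fo :: "'o \<Rightarrow> 'p" and Fa :: "'a \<Rightarrow> 'b"
  assumes finE: "finite_category E" and finB: "finite_category B"
    and is_functor_P: "is_functor E B Fo Fa"
    and fibred: "fibered_in_groupoids E B Fo Fa"
    and cofibred: "cofibered_in_groupoids E B Fo Fa"
begin

lemma finite_E: "finite (Ob E)" "finite (Ar E)" and finite_B: "finite (Ob B)" "finite (Ar B)"
  and cat_E: "category E" and cat_B: "category B"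
  using finE finB by (auto simp: finite_category_def)

lemma E_dom_cod: "f \<in> Ar E \<Longrightarrow> Dom E f \<in> Ob E" "f \<in> Ar E \<Longrightarrow> Cod E f \<in> Ob E"
  using cat_E by (auto simp: category_def)

lemma E_comp:
  assumes "f \<in> Ar E" "g \<in> Ar E" "Cod E f = Dom E g"
  shows "Comp E g f \<in> Ar E" "Dom E (Comp E g f) = Dom E f" "Cod E (Comp E g f) = Cod E g"
  using cat_E assms unfolding category_def by blast+

lemma B_id: "b \<in> Ob B \<Longrightarrow> Id B b \<in> Ar B" "b \<in> Ob B \<Longrightarrow> Dom B (Id B b) = b"
  "b \<in> Ob B \<Longrightarrow> Cod B (Id B b) = b"
  using cat_B by (auto simp: category_def)

lemma B_id_comp: "f \<in> Ar B \<Longrightarrow> Comp B (Id B (Cod B f)) f = f"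
  and B_comp_id: "f \<in> Ar B \<Longrightarrow> Comp B f (Id B (Dom B f)) = f"
  using cat_B unfolding category_def by blast+

lemma F_ob: "x \<in> Ob E \<Longrightarrow> Fo x \<in> Ob B"
  using is_functor_P by (simp add: is_functor_def)

lemma F_ar: "f \<in> Ar E \<Longrightarrow> Fa f \<in> Ar B" "f \<in> Ar E \<Longrightarrow> Dom B (Fa f) = Fo (Dom E f)"
  "f \<in> Ar E \<Longrightarrow> Cod B (Fa f) = Fo (Cod E f)"
  using is_functor_P by (auto simp: is_functor_def)

lemma F_comp:
  "f \<in> Ar E \<Longrightarrow> g \<in> Ar E \<Longrightarrow> Cod E f = Dom E g \<Longrightarrow> Fa (Comp E g f) = Comp B (Fa g) (Fa f)"
  using is_functor_P unfolding is_functor_def by blast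

definition lifts_from :: "'o \<Rightarrow> 'b \<Rightarrow> 'a set" where
  "lifts_from e u = {g \<in> Ar E. Dom E g = e \<and> Fa g = u}"

definition lifts_to :: "'o \<Rightarrow> 'b \<Rightarrow> 'a set" where
  "lifts_to e u = {g \<in> Ar E. Cod E g = e \<and> Fa g = u}"

definition deg_out :: "'o \<Rightarrow> nat" where
  "deg_out e = card (lifts_from e (Id B (Fo e)))"

definition deg_in :: "'o \<Rightarrow> nat" where
  "deg_in e = card (lifts_to e (Id B (Fo e)))"

lemma finite_lifts: "finite (lifts_from e u)" "finite (lifts_to e u)"
  using finite_E by (simp_all add: lifts_from_def lifts_to_def)

lemma lifts_nonempty:
  assumes "e \<in> Ob E" "u \<in> Ar B"
  shows "Dom B u = Fo e \<Longrightarrow> lifts_from e u \<noteq> {}" "Cod B u = Fo e \<Longrightarrow> lifts_to e u \<noteq> {}"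
  using assms cofibred fibred
  by (fastforce simp: lifts_from_def lifts_to_def cofibered_in_groupoids_def fibered_in_groupoids_def)+

text \<open>Since \<open>g\<close> is cocartesian, composing with \<open>g\<close> is a bijection from the vertical arrows out
  of \<open>Cod g\<close> onto the lifts of \<open>P g\<close> out of \<open>Dom g\<close>.\<close>
lemma card_lifts_from:
  assumes g: "g \<in> Ar E"
  shows "card (lifts_from (Dom E g) (Fa g)) = deg_out (Cod E g)"
proof -
  let ?b = "Fo (Cod E g)"
  have b: "?b \<in> Ob B" using g by (simp add: E_dom_cod F_ob)
  have Fg: "Comp B (Id B ?b) (Fa g) = Fa g" using g B_id_comp F_ar by metis
  have into: "(\<lambda>h. Comp E h g) ` lifts_from (Cod E g) (Id B ?b) \<subseteq> lifts_from (Dom E g) (Fa g)"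
    using g Fg by (auto simp: lifts_from_def E_comp F_comp)
  have "\<exists>!h. h \<in> lifts_from (Cod E g) (Id B ?b) \<and> Comp E h g = g2"
    if g2: "g2 \<in> lifts_from (Dom E g) (Fa g)" for g2
  proof -
    have "Fo (Cod E g2) = ?b" "Comp B (Id B ?b) (Fa g) = Fa g2"
      using g2 g Fg F_ar(3)[of g] F_ar(3)[of g2] by (auto simp: lifts_from_def)
    then have "\<exists>!h. h \<in> Ar E \<and> Dom E h = Cod E g \<and> Cod E h = Cod E g2 \<and>
                   Fa h = Id B ?b \<and> Comp E h g = g2"
      using cofibred g g2 b B_id
      unfolding cofibered_in_groupoids_def cocartesian_def lifts_from_def by auto
    moreover have "(h \<in> lifts_from (Cod E g) (Id B ?b) \<and> Comp E h g = g2) \<longleftrightarrow>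
        (h \<in> Ar E \<and> Dom E h = Cod E g \<and> Cod E h = Cod E g2 \<and> Fa h = Id B ?b \<and> Comp E h g = g2)"
      for h using g by (auto simp: lifts_from_def E_comp)
    ultimately show ?thesis by simp
  qed
  then have "card (lifts_from (Cod E g) (Id B ?b)) = card (lifts_from (Dom E g) (Fa g))"
    by (intro card_eq_unique_preimages[OF into]) blast
  then show ?thesis unfolding deg_out_def by simp
qed

text \<open>Dually, as \<open>g\<close> is cartesian, the lifts of \<open>P g\<close> into \<open>Cod g\<close> correspond to the
  vertical arrows into \<open>Dom g\<close>.\<close>
lemma card_lifts_to:
  assumes g: "g \<in> Ar E"
  shows "card (lifts_to (Cod E g) (Fa g)) = deg_in (Dom E g)"
proof -
  let ?b = "Fo (Dom E g)"
  have b: "?b \<in> Ob B" using g by (simp add: E_dom_cod F_ob)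
  have Fg: "Comp B (Fa g) (Id B ?b) = Fa g" using g B_comp_id F_ar by metis
  have into: "(\<lambda>h. Comp E g h) ` lifts_to (Dom E g) (Id B ?b) \<subseteq> lifts_to (Cod E g) (Fa g)"
    using g Fg by (auto simp: lifts_to_def E_comp F_comp)
  have "\<exists>!h. h \<in> lifts_to (Dom E g) (Id B ?b) \<and> Comp E g h = g2"
    if g2: "g2 \<in> lifts_to (Cod E g) (Fa g)" for g2
  proof -
    have "Fo (Dom E g2) = ?b" "Comp B (Fa g) (Id B ?b) = Fa g2"
      using g2 g Fg F_ar(2)[of g] F_ar(2)[of g2] by (auto simp: lifts_to_def)
    then have "\<exists>!h. h \<in> Ar E \<and> Dom E h = Dom E g2 \<and> Cod E h = Dom E g \<and>
                   Fa h = Id B ?b \<and> Comp E g h = g2"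
      using fibred g g2 b B_id
      unfolding fibered_in_groupoids_def cartesian_def lifts_to_def by auto
    moreover have "(h \<in> lifts_to (Dom E g) (Id B ?b) \<and> Comp E g h = g2) \<longleftrightarrow>
        (h \<in> Ar E \<and> Dom E h = Dom E g2 \<and> Cod E h = Dom E g \<and> Fa h = Id B ?b \<and> Comp E g h = g2)"
      for h using g by (auto simp: lifts_to_def E_comp)
    ultimately show ?thesis by simp
  qed
  then have "card (lifts_to (Dom E g) (Id B ?b)) = card (lifts_to (Cod E g) (Fa g))"
    by (intro card_eq_unique_preimages[OF into]) blast
  then show ?thesis unfolding deg_in_def by simp
qed

text \<open>The key counting fact: all lifts of \<open>u\<close> out of \<open>e\<close> have targets with \<open>deg_out\<close> equal to
  the number of these lifts, so the reciprocals sum to one.\<close>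
lemma sum_lifts_from:
  assumes "e \<in> Ob E" "u \<in> Ar B" "Dom B u = Fo e"
  shows "(\<Sum>g\<in>lifts_from e u. 1 / of_nat (deg_out (Cod E g)) :: rat) = 1"
proof -
  let ?S = "lifts_from e u"
  have deg: "deg_out (Cod E g) = card ?S" if "g \<in> ?S" for g
    using card_lifts_from[of g] that by (simp add: lifts_from_def)
  have "card ?S > 0"
    using lifts_nonempty(1)[OF assms] finite_lifts(1) by (simp add: card_gt_0_iff)
  then show ?thesis using deg by simp
qed

lemma sum_lifts_to:
  assumes "e \<in> Ob E" "u \<in> Ar B" "Cod B u = Fo e"
  shows "(\<Sum>g\<in>lifts_to e u. 1 / of_nat (deg_in (Dom E g)) :: rat) = 1"
proof -
  let ?S = "lifts_to e u"
  have deg: "deg_in (Dom E g) = card ?S" if "g \<in> ?S" for g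
    using card_lifts_to[of g] that by (simp add: lifts_to_def)
  have "card ?S > 0"
    using lifts_nonempty(2)[OF assms] finite_lifts(2) by (simp add: card_gt_0_iff)
  then show ?thesis using deg by simp
qed

lemma sum_lifts_by_source:
  assumes "u \<in> Ar B"
  shows "(\<Sum>g\<in>{g \<in> Ar E. Fa g = u}. h g) =
         (\<Sum>e\<in>Ob (fiber E B Fo Fa (Dom B u)). \<Sum>g\<in>lifts_from e u. h g)"
proof -
  have "(\<Sum>g\<in>{g \<in> Ar E. Fa g = u}. h g) =
        (\<Sum>e\<in>Ob (fiber E B Fo Fa (Dom B u)). \<Sum>g\<in>{g \<in> {g \<in> Ar E. Fa g = u}. Dom E g = e}. h g)"
    by (rule sum.group[symmetric])
      (use finite_E assms in \<open>auto simp: fiber_def E_dom_cod F_ar\<close>)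
  also have "\<dots> = (\<Sum>e\<in>Ob (fiber E B Fo Fa (Dom B u)). \<Sum>g\<in>lifts_from e u. h g)"
    by (intro sum.cong refl) (auto simp: lifts_from_def)
  finally show ?thesis .
qed

lemma sum_lifts_by_target:
  assumes "u \<in> Ar B"
  shows "(\<Sum>g\<in>{g \<in> Ar E. Fa g = u}. h g) =
         (\<Sum>e\<in>Ob (fiber E B Fo Fa (Cod B u)). \<Sum>g\<in>lifts_to e u. h g)"
proof -
  have "(\<Sum>g\<in>{g \<in> Ar E. Fa g = u}. h g) =
        (\<Sum>e\<in>Ob (fiber E B Fo Fa (Cod B u)). \<Sum>g\<in>{g \<in> {g \<in> Ar E. Fa g = u}. Cod E g = e}. h g)"
    by (rule sum.group[symmetric])
      (use finite_E assms in \<open>auto simp: fiber_def E_dom_cod F_ar\<close>)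
  also have "\<dots> = (\<Sum>e\<in>Ob (fiber E B Fo Fa (Cod B u)). \<Sum>g\<in>lifts_to e u. h g)"
    by (intro sum.cong refl) (auto simp: lifts_to_def)
  finally show ?thesis .
qed

lemma fiber_Ob: "Ob (fiber E B Fo Fa b) = {e \<in> Ob E. Fo e = b}"
  by (simp add: fiber_def)

lemma finite_fiber: "finite (Ob (fiber E B Fo Fa b))"
  using finite_E by (simp add: fiber_Ob)

lemma zeta_fiber_out:
  "zeta (fiber E B Fo Fa (Fo e)) e e' = of_nat (card {g \<in> lifts_from e (Id B (Fo e)). Cod E g = e'})"
  unfolding zeta_def hom_def fiber_def lifts_from_def by (auto intro!: arg_cong[where f = card])

lemma zeta_fiber_in:
  "zeta (fiber E B Fo Fa (Fo e')) e e' = of_nat (card {g \<in> lifts_to e' (Id B (Fo e')). Dom E g = e})"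
  unfolding zeta_def hom_def fiber_def lifts_to_def by (auto intro!: arg_cong[where f = card])

lemma vertical_ends:
  assumes "g \<in> Ar E" "Fa g = Id B b" "b \<in> Ob B"
  shows "Fo (Dom E g) = b" "Fo (Cod E g) = b"
  using assms F_ar(2,3)[of g] B_id(2,3) by auto

lemma fiber_weighting:
  "weighting (Ob (fiber E B Fo Fa b)) (Ob (fiber E B Fo Fa b)) (zeta (fiber E B Fo Fa b))
     (\<lambda>e. 1 / of_nat (deg_out e))"
  unfolding weighting_def
proof
  let ?X = "Ob (fiber E B Fo Fa b)"
  fix e assume "e \<in> ?X"
  then have e: "e \<in> Ob E" "b = Fo e" by (auto simp: fiber_Ob)
  let ?V = "lifts_from e (Id B b)"
  have img: "Cod E ` ?V \<subseteq> ?X"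
    using vertical_ends(2) e F_ob by (auto simp: lifts_from_def fiber_Ob E_dom_cod)
  have "(\<Sum>e'\<in>?X. zeta (fiber E B Fo Fa b) e e' * (1 / of_nat (deg_out e'))) =
        (\<Sum>g\<in>?V. 1 / of_nat (deg_out (Cod E g)))"
    unfolding e(2) zeta_fiber_out
    using sum_card_fibers[OF finite_lifts(1) finite_fiber img, of "\<lambda>e'. 1 / of_nat (deg_out e') :: rat"]
    by (simp add: e(2))
  also have "\<dots> = 1"
    using sum_lifts_from[OF e(1)] e F_ob B_id by simp
  finally show "(\<Sum>e'\<in>?X. zeta (fiber E B Fo Fa b) e e' * (1 / of_nat (deg_out e'))) = 1" .
qed

lemma fiber_coweighting:
  "coweighting (Ob (fiber E B Fo Fa b)) (Ob (fiber E B Fo Fa b)) (zeta (fiber E B Fo Fa b))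
     (\<lambda>e. 1 / of_nat (deg_in e))"
  unfolding coweighting_def
proof
  let ?X = "Ob (fiber E B Fo Fa b)"
  fix e' assume "e' \<in> ?X"
  then have e': "e' \<in> Ob E" "b = Fo e'" by (auto simp: fiber_Ob)
  let ?V = "lifts_to e' (Id B b)"
  have img: "Dom E ` ?V \<subseteq> ?X"
    using vertical_ends(1) e' F_ob by (auto simp: lifts_to_def fiber_Ob E_dom_cod)
  have "(\<Sum>e\<in>?X. zeta (fiber E B Fo Fa b) e e' * (1 / of_nat (deg_in e))) =
        (\<Sum>g\<in>?V. 1 / of_nat (deg_in (Dom E g)))"
    unfolding e'(2) zeta_fiber_in
    using sum_card_fibers[OF finite_lifts(2) finite_fiber img, of "\<lambda>e. 1 / of_nat (deg_in e) :: rat"]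
    by (simp add: e'(2))
  then have "(\<Sum>e\<in>?X. 1 / of_nat (deg_in e) * zeta (fiber E B Fo Fa b) e e') =
        (\<Sum>g\<in>?V. 1 / of_nat (deg_in (Dom E g)))"
    by (simp add: mult.commute)
  also have "\<dots> = 1"
    using sum_lifts_to[OF e'(1)] e' F_ob B_id by simp
  finally show "(\<Sum>e\<in>?X. 1 / of_nat (deg_in e) * zeta (fiber E B Fo Fa b) e e') = 1" .
qed

definition fib_mass :: "'p \<Rightarrow> rat" where
  "fib_mass b = (\<Sum>e\<in>Ob (fiber E B Fo Fa b). 1 / of_nat (deg_out e))"

lemma fiber_euler: "has_euler_cat (fiber E B Fo Fa b)"
  unfolding has_euler_cat_def has_euler_mat_def using fiber_weighting fiber_coweighting by blast

lemma chi_fiber: "chi (fiber E B Fo Fa b) = fib_mass b"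
  unfolding chi_def fib_mass_def
  using euler_mat_eq[OF finite_fiber finite_fiber _ fiber_weighting] fiber_euler
  by (simp add: has_euler_cat_def)

lemma fib_mass_coweighting: "fib_mass b = (\<Sum>e\<in>Ob (fiber E B Fo Fa b). 1 / of_nat (deg_in e))"
  unfolding fib_mass_def
  by (rule weighting_coweighting_sum[OF finite_fiber finite_fiber fiber_weighting fiber_coweighting])

text \<open>The fiber mass is invariant along arrows of \<open>B\<close>: counting the lifts of \<open>u\<close>, each weighted
  by \<open>1/(deg_in source * deg_out target)\<close>, by source gives the comass over \<open>Dom u\<close> and by target
  the mass over \<open>Cod u\<close>.\<close>
lemma fib_mass_arrow_invariant:
  assumes u: "u \<in> Ar B"
  shows "fib_mass (Dom B u) = fib_mass (Cod B u)"
proof -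
  let ?t = "\<lambda>g. 1 / of_nat (deg_in (Dom E g)) * (1 / of_nat (deg_out (Cod E g))) :: rat"
  have by_source: "(\<Sum>g\<in>lifts_from e u. ?t g) = 1 / of_nat (deg_in e)"
    if "e \<in> Ob (fiber E B Fo Fa (Dom B u))" for e
  proof -
    have e: "e \<in> Ob E" "Dom B u = Fo e" using that by (auto simp: fiber_Ob)
    have "(\<Sum>g\<in>lifts_from e u. ?t g) =
          1 / of_nat (deg_in e) * (\<Sum>g\<in>lifts_from e u. 1 / of_nat (deg_out (Cod E g)))"
      by (simp add: sum_distrib_left lifts_from_def)
    then show ?thesis using sum_lifts_from[OF e(1) u e(2)] by simp
  qed
  have by_target: "(\<Sum>g\<in>lifts_to e u. ?t g) = 1 / of_nat (deg_out e)"
    if "e \<in> Ob (fiber E B Fo Fa (Cod B u))" for e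
  proof -
    have e: "e \<in> Ob E" "Cod B u = Fo e" using that by (auto simp: fiber_Ob)
    have "(\<Sum>g\<in>lifts_to e u. ?t g) =
          (\<Sum>g\<in>lifts_to e u. 1 / of_nat (deg_in (Dom E g)) * (1 / of_nat (deg_out e)))"
      by (intro sum.cong refl) (simp add: lifts_to_def)
    also have "\<dots> = (\<Sum>g\<in>lifts_to e u. 1 / of_nat (deg_in (Dom E g))) * (1 / of_nat (deg_out e))"
      by (rule sum_distrib_right[symmetric])
    also have "\<dots> = 1 / of_nat (deg_out e)"
      using sum_lifts_to[OF e(1) u e(2)] by simp
    finally show ?thesis .
  qed
  have "fib_mass (Dom B u) = (\<Sum>e\<in>Ob (fiber E B Fo Fa (Dom B u)). \<Sum>g\<in>lifts_from e u. ?t g)"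
    unfolding fib_mass_coweighting using by_source by simp
  also have "\<dots> = (\<Sum>g\<in>{g \<in> Ar E. Fa g = u}. ?t g)"
    by (rule sum_lifts_by_source[OF u, symmetric])
  also have "\<dots> = (\<Sum>e\<in>Ob (fiber E B Fo Fa (Cod B u)). \<Sum>g\<in>lifts_to e u. ?t g)"
    by (rule sum_lifts_by_target[OF u])
  also have "\<dots> = fib_mass (Cod B u)"
    unfolding fib_mass_def using by_target by simp
  finally show ?thesis .
qed

text \<open>A weighting \<open>K\<close> of \<open>B\<close> lifts to the weighting \<open>e \<mapsto> K (P e) / deg_out e\<close> of \<open>E\<close>:
  group the arrows out of \<open>e\<close> by their image \<open>u\<close>; the lifts of each \<open>u\<close> contribute \<open>K (Cod u)\<close>.\<close>
lemma lifted_weighting: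
  assumes K: "weighting (Ob B) (Ob B) (zeta B) K"
  shows "weighting (Ob E) (Ob E) (zeta E) (\<lambda>e. K (Fo e) / of_nat (deg_out e))"
  unfolding weighting_def
proof
  fix e assume e: "e \<in> Ob E"
  let ?A = "{g \<in> Ar E. Dom E g = e}" and ?U = "{u \<in> Ar B. Dom B u = Fo e}"
  let ?w = "\<lambda>e'. K (Fo e') / of_nat (deg_out e')"
  have lifts: "(\<Sum>g\<in>lifts_from e u. ?w (Cod E g)) = K (Cod B u)" if u: "u \<in> ?U" for u
  proof -
    have "(\<Sum>g\<in>lifts_from e u. ?w (Cod E g)) =
          K (Cod B u) * (\<Sum>g\<in>lifts_from e u. 1 / of_nat (deg_out (Cod E g)))"
      by (simp add: sum_distrib_left lifts_from_def F_ar(3)[symmetric])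
    then show ?thesis using sum_lifts_from[OF e] u by simp
  qed
  have "(\<Sum>e'\<in>Ob E. zeta E e e' * ?w e') = (\<Sum>g\<in>?A. ?w (Cod E g))"
    unfolding zeta_as_card
    by (rule sum_card_fibers) (use finite_E in \<open>auto simp: E_dom_cod\<close>)
  also have "\<dots> = (\<Sum>u\<in>?U. \<Sum>g\<in>{g \<in> ?A. Fa g = u}. ?w (Cod E g))"
    by (rule sum.group[symmetric]) (use finite_E finite_B in \<open>auto simp: F_ar\<close>)
  also have "\<dots> = (\<Sum>u\<in>?U. K (Cod B u))"
    using lifts by (intro sum.cong) (simp_all add: lifts_from_def conj_ac)
  also have "\<dots> = (\<Sum>b'\<in>Ob B. zeta B (Fo e) b' * K b')"
    unfolding zeta_as_card
    by (rule sum_card_fibers[symmetric]) (use finite_B cat_B in \<open>auto simp: category_def\<close>)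
  also have "\<dots> = 1" using K e F_ob by (simp add: weighting_def)
  finally show "(\<Sum>e'\<in>Ob E. zeta E e e' * ?w e') = 1" .
qed

lemma chi_total:
  assumes "has_euler_cat E" "weighting (Ob B) (Ob B) (zeta B) K"
  shows "chi E = (\<Sum>b\<in>Ob B. K b * fib_mass b)"
proof -
  have "chi E = (\<Sum>e\<in>Ob E. K (Fo e) / of_nat (deg_out e))"
    unfolding chi_def using assms finite_E lifted_weighting
    by (intro euler_mat_eq) (simp_all add: has_euler_cat_def)
  also have "\<dots> = (\<Sum>b\<in>Ob B. \<Sum>e\<in>Ob (fiber E B Fo Fa b). K (Fo e) / of_nat (deg_out e))"
    unfolding fiber_Ob by (rule sum.group[symmetric]) (use finite_E finite_B F_ob in auto)
  also have "\<dots> = (\<Sum>b\<in>Ob B. K b * fib_mass b)"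
    unfolding fib_mass_def by (intro sum.cong refl) (simp add: sum_distrib_left fiber_Ob)
  finally show ?thesis .
qed

end

theorem corollary2p10:
  fixes E :: "('o, 'a) cat" and B :: "('p, 'b) cat"
    and Fo :: "'o \<Rightarrow> 'p" and Fa :: "'a \<Rightarrow> 'b"
    and sel :: "'p set \<Rightarrow> 'p"
  assumes "finite_category E" and "finite_category B"
    and "is_functor E B Fo Fa"
    and "fibered_in_groupoids E B Fo Fa"
    and "cofibered_in_groupoids E B Fo Fa"
    and "has_euler_cat E"
    and "\<forall>Bi\<in>components B. has_euler_cat (full_sub B Bi)"
    and "\<forall>Bi\<in>components B. sel Bi \<in> Bi"
  shows "(\<forall>Bi\<in>components B. has_euler_cat (fiber E B Fo Fa (sel Bi))) \<and>
         chi E = (\<Sum>Bi\<in>components B. chi (full_sub B Bi) * chi (fiber E B Fo Fa (sel Bi)))"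
proof -
  interpret fibred_cofibred E B Fo Fa by (rule fibred_cofibred.intro[OF assms(1-5)])
  obtain K where K: "weighting (Ob B) (Ob B) (zeta B) K"
    and chi_Bi: "\<forall>Bi\<in>components B. chi (full_sub B Bi) = (\<Sum>b\<in>Bi. K b)"
    using weighting_from_components[OF assms(2,7)] by blast
  have const: "fib_mass b = fib_mass (sel Bi)" if "Bi \<in> components B" "b \<in> Bi" for Bi b
  proof -
    have "b \<in> component_of B (sel Bi)"
      using component_eq_member[OF that(1)] assms(8) that by metis
    then show ?thesis
      using arrow_invariant_component_const[OF cat_B] fib_mass_arrow_invariant by blast
  qed
  have "chi E = (\<Sum>Bi\<in>components B. \<Sum>b\<in>Bi. K b * fib_mass b)"
    using chi_total[OF assms(6) K] sum_by_components[OF finite_B(1)] by simp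
  also have "\<dots> = (\<Sum>Bi\<in>components B. chi (full_sub B Bi) * fib_mass (sel Bi))"
    using const chi_Bi by (simp add: sum_distrib_right)
  finally show ?thesis using fiber_euler chi_fiber by simp
qed

end
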